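(* Let $p$ be a prime and $1\le r\leq s$ integers, and let $\varepsilon(r,s,p)=(\varepsilon_1,\dots,\varepsilon_r)$. Then $|\varepsilon_i|\leq r-1$ for $1\leq i\leq r$.
   Context: For a positive integer $n$, let $J_n$ denote the $n\times n$ matrix with $1$s in positions $(i,i)$ for $1\le i\le n$ and $(i,i+1)$ for $1\le i<n$, and $0$s elsewhere. For $1\le r\le s$, the Jordan canonical form of $J_r\otimes J_s$ over a field of characteristic $p$ is $J_{\lambda_1}\oplus\cdots\oplus J_{\lambda_r}$ with $\lambda_1\ge\cdots\ge\lambda_r>0$; write $\lambda(r,s,p)=(\lambda_1,\dots,\lambda_r)$. The deviation vector is $\varepsilon(r,s,p)=(\lambda_1-s,\dots,\lambda_r-s)$. *)

theory Defs
  imports "Jordan_Normal_Form.Jordan_Normal_Form"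
begin

definition kron_mat :: "'a :: times mat \<Rightarrow> 'a mat \<Rightarrow> 'a mat" where
  "kron_mat A B = mat (dim_row A * dim_row B) (dim_col A * dim_col B)
     (\<lambda>(i,j). A $$ (i div dim_row B, j div dim_col B) * B $$ (i mod dim_row B, j mod dim_col B))"

definition J :: "nat \<Rightarrow> 'a :: {zero,one} mat" where
  "J n = jordan_block n 1"

end

theory Submission
  imports Defs "Jordan_Normal_Form.Jordan_Normal_Form_Uniqueness"
    "HOL-Computational_Algebra.Formal_Power_Series" "HOL-Library.Product_Lexorder"
begin

text \<open>Identify \<open>F\<^sup>r \<otimes> F\<^sup>s\<close> with \<open>F[x,y]/(x\<^sup>r, y\<^sup>s)\<close> so that \<open>J\<^sub>r \<otimes> J\<^sub>s\<close> becomes multiplication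
  by \<open>(1 + x)(1 + y)\<close>; then \<open>N = J\<^sub>r \<otimes> J\<^sub>s - 1\<close> is multiplication by \<open>u = x + y + xy\<close>.
  Since \<open>u\<^sup>r\<^sup>+\<^sup>s\<^sup>-\<^sup>1 = 0\<close>, every Jordan block has eigenvalue 1 and size at most \<open>r + s - 1\<close>.
  A kernel element of \<open>u\<close> is determined by its coefficients at \<open>y\<^sup>s\<^sup>-\<^sup>1\<close>, so there are at most
  \<open>r\<close> blocks. Finally \<open>(u - x)\<^sup>s = y\<^sup>s (1 + x)\<^sup>s = 0\<close> yields an element \<open>B\<close> with
  \<open>u\<^sup>s\<^sup>-\<^sup>r\<^sup>+\<^sup>1 B = 0\<close> whose multiples \<open>x\<^sup>a y\<^sup>c B\<close> (\<open>a < r\<close>, \<open>c \<le> s - r\<close>) are independent, so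
  \<open>dim ker N\<^sup>s\<^sup>-\<^sup>r\<^sup>+\<^sup>1 \<ge> r (s - r + 1)\<close>; with at most \<open>r\<close> blocks this forces every block
  to have size at least \<open>s - r + 1\<close>. Nothing depends on the characteristic of the field.\<close>

lemma kernel_dim_ge_triangular:
  fixes C :: "'a::field mat" and key :: "'k \<Rightarrow> 'b::linorder"
  assumes C: "C \<in> carrier_mat n n" and K: "finite K" "inj_on key K"
    and carrier: "\<And>k. k \<in> K \<Longrightarrow> w k \<in> carrier_vec n"
    and kernel: "\<And>k. k \<in> K \<Longrightarrow> C *\<^sub>v w k = 0\<^sub>v n"
    and pivot: "\<And>k. k \<in> K \<Longrightarrow> piv k < n" "\<And>k. k \<in> K \<Longrightarrow> w k $ piv k = 1"
    and below: "\<And>k l. k \<in> K \<Longrightarrow> l \<in> K \<Longrightarrow> key l < key k \<Longrightarrow> w l $ piv k = 0"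
  shows "card K \<le> kernel_dim C"
proof -
  interpret kernel n n C by (unfold_locales, rule C)
  have below_le: "w l $ piv k = 0" if "k \<in> K" "l \<in> K" "l \<noteq> k" "key l \<le> key k" for k l
    using below[OF that(1,2)] that K(2) by (metis inj_onD order.not_eq_order_implies_strict)
  have inj: "inj_on w K"
  proof (rule inj_onI, rule ccontr)
    fix k l assume kl: "k \<in> K" "l \<in> K" "w k = w l" "k \<noteq> l"
    show False
      using linorder_le_cases[of "key l" "key k"] below_le[of k l] below_le[of l k]
        pivot(2)[of k] pivot(2)[of l] kl by auto
  qed
  have "NC.lin_indpt (w ` K)"
  proof
    assume "NC.lin_dep (w ` K)"
    then obtain U a v where U: "finite U" "U \<subseteq> w ` K" "NC.lincomb a U = 0\<^sub>v n"
      and v: "v \<in> U" "a v \<noteq> 0"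
      unfolding NC.lin_dep_def by auto
    txt \<open>The vector with nonzero coefficient and largest key is the only one not vanishing
      at its pivot.\<close>
    define S where "S = {k \<in> K. w k \<in> U \<and> a (w k) \<noteq> 0}"
    have fin: "finite (key ` S)" using K unfolding S_def by simp
    have "key ` S \<noteq> {}" using v U(2) unfolding S_def by auto
    with fin obtain k where k: "k \<in> S" "key k = Max (key ` S)"
      using Max_in[OF fin] by (metis imageE)
    have max: "key l \<le> key k" if "l \<in> S" for l using k(2) that fin by simp
    have UC: "U \<subseteq> carrier_vec n" using U(2) carrier by auto
    have "0 = NC.lincomb a U $ piv k" using U(3) pivot(1)[of k] k(1) unfolding S_def by simp
    also have "\<dots> = (\<Sum>u\<in>U. a u * u $ piv k)"
      using NC.lincomb_index[OF _ UC] pivot(1)[of k] k(1) unfolding S_def by simp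
    also have "\<dots> = (\<Sum>u\<in>{w k}. a u * u $ piv k)"
    proof (rule sum.mono_neutral_right[OF U(1)])
      show "{w k} \<subseteq> U" using k(1) unfolding S_def by auto
      show "\<forall>u\<in>U - {w k}. a u * u $ piv k = 0"
      proof
        fix u assume u: "u \<in> U - {w k}"
        then obtain l where l: "l \<in> K" "u = w l" using U(2) by auto
        show "a u * u $ piv k = 0"
        proof (cases "a u = 0")
          case False
          hence "l \<in> S" using u l unfolding S_def by auto
          thus ?thesis using below_le[of k l] max[of l] k(1) l u unfolding S_def by auto
        qed simp
      qed
    qed
    also have "\<dots> = a (w k)" using pivot(2)[of k] k(1) unfolding S_def by simp
    finally show False using k(1) unfolding S_def by simp
  qed
  moreover have kernel_image: "w ` K \<subseteq> mat_kernel C"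
    using carrier kernel C by (auto intro!: mat_kernelI)
  ultimately have "lin_indpt (w ` K)" using lindep_same by simp
  moreover obtain B where "finite B" "basis B" using kernel_basis_exists[OF C] by auto
  hence "Ker.fin_dim" unfolding Ker.fin_dim_def Ker.basis_def by auto
  ultimately have "card (w ` K) \<le> dim" using Ker.li_le_dim(2) kernel_image by simp
  thus ?thesis using card_image[OF inj] by simp
qed

lemma inj_on_coordinates_mat_kernel:
  fixes C :: "'a::field mat" and \<sigma> :: "nat \<Rightarrow> nat"
  assumes C: "C \<in> carrier_mat n n" and \<sigma>: "\<And>i. i < m \<Longrightarrow> \<sigma> i < n"
    and determined: "\<And>v. v \<in> mat_kernel C \<Longrightarrow> (\<And>i. i < m \<Longrightarrow> v $ \<sigma> i = 0) \<Longrightarrow> v = 0\<^sub>v n"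
  shows "inj_on (\<lambda>v. vec m (\<lambda>i. v $ \<sigma> i)) (mat_kernel C)"
proof (rule inj_onI)
  fix x y assume x: "x \<in> mat_kernel C" and y: "y \<in> mat_kernel C"
    and eq: "vec m (\<lambda>i. x $ \<sigma> i) = vec m (\<lambda>i. y $ \<sigma> i)"
  have carrier: "x \<in> carrier_vec n" "y \<in> carrier_vec n" using x y mat_kernelD(1)[OF C] by auto
  have "x - y \<in> mat_kernel C"
    using x y mat_kernelD[OF C] mult_minus_distrib_mat_vec[OF C] by (intro mat_kernelI[OF C]) auto
  moreover have "(x - y) $ \<sigma> i = 0" if "i < m" for i
    using arg_cong[OF eq, of "\<lambda>v. v $ i"] that \<sigma>[OF that] carrier by auto
  ultimately have diff: "x - y = 0\<^sub>v n" by (rule determined)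
  show "x = y"
  proof (rule eq_vecI)
    fix i assume "i < dim_vec y"
    thus "x $ i = y $ i" using arg_cong[OF diff, of "\<lambda>v. v $ i"] carrier by auto
  qed (use carrier in simp)
qed

lemma kernel_dim_le_coordinates:
  fixes C :: "'a::field mat" and \<sigma> :: "nat \<Rightarrow> nat"
  assumes C: "C \<in> carrier_mat n n" and \<sigma>: "\<And>i. i < m \<Longrightarrow> \<sigma> i < n"
    and determined: "\<And>v. v \<in> mat_kernel C \<Longrightarrow> (\<And>i. i < m \<Longrightarrow> v $ \<sigma> i = 0) \<Longrightarrow> v = 0\<^sub>v n"
  shows "kernel_dim C \<le> m"
proof -
  interpret kernel n n C by (unfold_locales, rule C)
  interpret Fm: vec_space "TYPE('a)" m .
  obtain B where B: "finite B" "basis B" using kernel_basis_exists[OF C] by auto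
  hence BK: "B \<subseteq> mat_kernel C" and li: "lin_indpt B" unfolding Ker.basis_def by auto
  define \<phi> where "\<phi> v = vec m (\<lambda>i. v $ \<sigma> i)" for v :: "'a vec"
  have inj: "inj_on \<phi> B"
    using inj_on_subset[OF inj_on_coordinates_mat_kernel[OF C \<sigma> determined] BK]
    unfolding \<phi>_def by simp
  have "Fm.lin_indpt (\<phi> ` B)"
  proof
    assume "Fm.lin_dep (\<phi> ` B)"
    then obtain U a v where U: "finite U" "U \<subseteq> \<phi> ` B" "Fm.lincomb a U = 0\<^sub>v m"
      and v: "v \<in> U" "a v \<noteq> 0"
      unfolding Fm.lin_dep_def by auto
    define U' where "U' = {x \<in> B. \<phi> x \<in> U}"
    have U': "U' \<subseteq> B" "finite U'" "bij_betw \<phi> U' U"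
      using B(1) U(2) inj unfolding U'_def bij_betw_def inj_on_def by auto
    have "lincomb (a \<circ> \<phi>) U' = 0\<^sub>v n"
    proof (rule determined)
      show "lincomb (a \<circ> \<phi>) U' \<in> mat_kernel C"
        using U' BK by (intro Ker.lincomb_closed) auto
      fix i assume i: "i < m"
      have "lincomb (a \<circ> \<phi>) U' $ \<sigma> i = (\<Sum>x\<in>U'. a (\<phi> x) * \<phi> x $ i)"
        using lincomb_index[OF \<sigma>[OF i], of U' "a \<circ> \<phi>"] U'(1) BK i by (simp add: \<phi>_def)
      also have "\<dots> = (\<Sum>u\<in>U. a u * u $ i)"
        by (rule sum.reindex_bij_betw[OF U'(3)])
      also have "\<dots> = Fm.lincomb a U $ i"
        by (rule Fm.lincomb_index[OF i, symmetric]) (use U(2) \<phi>_def in auto)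
      finally show "lincomb (a \<circ> \<phi>) U' $ \<sigma> i = 0" using U(3) i by simp
    qed
    moreover obtain x where "x \<in> U'" "v = \<phi> x" using v(1) U(2) unfolding U'_def by auto
    ultimately have "lin_dep B"
      unfolding Ker.lin_dep_def using U' v(2) by (intro exI[of _ U'] exI[of _ "a \<circ> \<phi>"]) auto
    thus False using li by simp
  qed
  moreover have "\<phi> ` B \<subseteq> carrier_vec m" unfolding \<phi>_def by auto
  ultimately have "card (\<phi> ` B) \<le> m" using Fm.li_le_dim(2)[OF Fm.fin_dim] Fm.dim_is_n by metis
  thus ?thesis using card_image[OF inj] Ker.dim_basis[OF B] by simp
qed

definition var_x :: "'a::comm_ring_1 fps fps" where
  "var_x = fps_const fps_X"

abbreviation var_y :: "'a::comm_ring_1 fps fps" where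
  "var_y \<equiv> fps_X"

definition var_u :: "'a::comm_ring_1 fps fps" where
  "var_u = var_x + var_y + var_x * var_y"

abbreviation coeff2 :: "'a fps fps \<Rightarrow> nat \<Rightarrow> nat \<Rightarrow> 'a" where
  "coeff2 P a b \<equiv> fps_nth (fps_nth P b) a"

text \<open>\<open>P\<close> lies in the ideal \<open>(x\<^sup>r, y\<^sup>s)\<close>.\<close>
definition trunc_zero :: "nat \<Rightarrow> nat \<Rightarrow> 'a::comm_ring_1 fps fps \<Rightarrow> bool" where
  "trunc_zero r s P \<longleftrightarrow> (\<forall>a<r. \<forall>b<s. coeff2 P a b = 0)"

lemma coeff2_mult:
  "coeff2 (C * P) a b = (\<Sum>i=0..b. \<Sum>k=0..a. coeff2 C k i * coeff2 P (a - k) (b - i))"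
  by (simp add: fps_mult_nth fps_sum_nth)

lemma trunc_zero_mult_left:
  assumes "trunc_zero r s P" shows "trunc_zero r s (C * P)"
  using assms unfolding trunc_zero_def coeff2_mult by (auto intro!: sum.neutral)

lemma trunc_zero_mult_right:
  assumes "trunc_zero r s P" shows "trunc_zero r s (P * C)"
  using trunc_zero_mult_left[OF assms] by (simp add: mult.commute)

lemma trunc_zero_diff:
  assumes "trunc_zero r s P" "trunc_zero r s Q" shows "trunc_zero r s (P - Q)"
  using assms unfolding trunc_zero_def by simp

lemma trunc_zero_var_x_power: "trunc_zero r s (var_x ^ r * P)"
  unfolding trunc_zero_def var_x_def fps_const_power
  by (simp add: fps_mult_left_const_nth fps_X_power_mult_nth)

lemma trunc_zero_var_y_power: "trunc_zero r s (var_y ^ s * P)"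
  unfolding trunc_zero_def by (simp add: fps_X_power_mult_nth)

lemma coeff2_var_u_mult:
  "coeff2 (var_u * P) a b =
     (if 0 < a then coeff2 P (a - 1) b else 0) +
     (if 0 < b then coeff2 P a (b - 1) + (if 0 < a then coeff2 P (a - 1) (b - 1) else 0) else 0)"
  unfolding var_u_def var_x_def
  by (simp add: algebra_simps fps_mult_left_const_nth fps_X_mult_nth)

lemma coeff2_var_u_power: "a + b < n \<Longrightarrow> coeff2 (var_u ^ n) a b = 0"
proof (induction n arbitrary: a b)
  case (Suc n)
  thus ?case unfolding power_Suc coeff2_var_u_mult by auto
qed simp

lemma trunc_zero_var_u_power:
  assumes "r + s \<le> Suc n" shows "trunc_zero r s (var_u ^ n)"
  using assms unfolding trunc_zero_def by (auto intro: coeff2_var_u_power)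

lemma fps_nth_var_u_mult:
  "fps_nth (var_u * P) b =
     fps_X * fps_nth P b + (if b = 0 then 0 else (1 + fps_X) * fps_nth P (b - 1))"
proof -
  have "var_u * P = fps_const fps_X * P + fps_const (1 + fps_X) * (fps_X * P)"
    unfolding var_u_def var_x_def by (simp add: algebra_simps flip: fps_const_add)
  thus ?thesis by (simp add: fps_mult_left_const_nth fps_X_mult_nth)
qed

lemma fps_nth_var_u_power_above: "n < b \<Longrightarrow> fps_nth (var_u ^ n) b = 0"
  by (induction n arbitrary: b) (auto simp: fps_nth_var_u_mult)

lemma fps_nth_var_u_power_top: "fps_nth (var_u ^ n) n = (1 + fps_X) ^ n"
  by (induction n) (auto simp: fps_nth_var_u_mult fps_nth_var_u_power_above)

lemma fps_nth_monomial_mult: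
  "fps_nth (var_x ^ a * var_y ^ c * P) b = (if b < c then 0 else fps_X ^ a * fps_nth P (b - c))"
proof -
  have "var_x ^ a * var_y ^ c * P = var_y ^ c * (fps_const (fps_X ^ a) * P)"
    unfolding var_x_def fps_const_power by (simp add: algebra_simps)
  thus ?thesis by (simp add: fps_X_power_mult_nth fps_mult_left_const_nth)
qed

text \<open>In the binomial expansion of \<open>(u - x)\<^sup>s = y\<^sup>s (1 + x)\<^sup>s\<close>, the terms of index \<open>i < r\<close> are
  divisible by \<open>u\<^sup>s\<^sup>-\<^sup>r\<^sup>+\<^sup>1\<close> with cofactor \<open>kernel_gen r s\<close>, the others by \<open>x\<^sup>r\<close>.\<close>
definition kernel_gen :: "nat \<Rightarrow> nat \<Rightarrow> 'a::comm_ring_1 fps fps" where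
  "kernel_gen r s = (\<Sum>i<r. of_nat (s choose i) * (- var_x) ^ i * var_u ^ (r - 1 - i))"

lemma fps_nth_kernel_gen:
  "fps_nth (kernel_gen r s) b =
     (\<Sum>i<r. of_nat (s choose i) * (- fps_X) ^ i * fps_nth (var_u ^ (r - 1 - i)) b)"
proof -
  have "of_nat c * (- var_x) ^ i = (fps_const (of_nat c * (- fps_X) ^ i) :: 'a fps fps)" for c i
    unfolding var_x_def by (simp flip: fps_of_nat)
  thus ?thesis unfolding kernel_gen_def fps_sum_nth by (simp add: fps_mult_left_const_nth)
qed

lemma fps_nth_kernel_gen_above: "r - 1 < b \<Longrightarrow> fps_nth (kernel_gen r s) b = 0"
  unfolding fps_nth_kernel_gen by (intro sum.neutral) (auto simp: fps_nth_var_u_power_above)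

lemma fps_nth_kernel_gen_top: "fps_nth (kernel_gen (Suc m) s) m = (1 + fps_X) ^ m"
proof -
  have "fps_nth (kernel_gen (Suc m) s) m =
      (\<Sum>i\<in>{0}. of_nat (s choose i) * (- fps_X) ^ i * fps_nth (var_u ^ (Suc m - 1 - i)) m)"
    unfolding fps_nth_kernel_gen
    by (intro sum.mono_neutral_right) (auto simp: fps_nth_var_u_power_above)
  thus ?thesis by (simp add: fps_nth_var_u_power_top)
qed

lemma trunc_zero_var_u_power_kernel_gen:
  assumes r: "r \<le> s"
  shows "trunc_zero r s (var_u ^ (s - r + 1) * kernel_gen r s)"
proof -
  define R :: "'a fps fps" where
    "R = (\<Sum>k\<in>{r..s}. of_nat (s choose k) * (- 1) ^ k * var_x ^ (k - r) * var_u ^ (s - k))"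
  let ?t = "\<lambda>k. of_nat (s choose k) * (- var_x) ^ k * var_u ^ (s - k) :: 'a fps fps"
  have head: "(\<Sum>k<r. ?t k) = var_u ^ (s - r + 1) * kernel_gen r s"
    unfolding kernel_gen_def sum_distrib_left
  proof (rule sum.cong[OF refl])
    fix k assume "k \<in> {..<r}"
    hence "s - k = (s - r + 1) + (r - 1 - k)" using r by auto
    hence "var_u ^ (s - k) = var_u ^ (s - r + 1) * (var_u ^ (r - 1 - k) :: 'a fps fps)"
      by (metis power_add)
    thus "?t k = var_u ^ (s - r + 1) * (of_nat (s choose k) * (- var_x) ^ k * var_u ^ (r - 1 - k))"
      by (simp add: algebra_simps)
  qed
  have tail: "(\<Sum>k\<in>{r..s}. ?t k) = var_x ^ r * R"
    unfolding R_def sum_distrib_left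
  proof (rule sum.cong[OF refl])
    fix k assume "k \<in> {r..s}"
    hence "k = r + (k - r)" by auto
    hence "(- var_x) ^ k = (- 1) ^ k * (var_x ^ r * var_x ^ (k - r) :: 'a fps fps)"
      by (metis power_add power_minus)
    thus "?t k = var_x ^ r * (of_nat (s choose k) * (- 1) ^ k * var_x ^ (k - r) * var_u ^ (s - k))"
      by (simp add: algebra_simps)
  qed
  have "var_y ^ s * (1 + var_x) ^ s = (var_u - var_x :: 'a fps fps) ^ s"
    unfolding var_u_def by (simp add: algebra_simps flip: power_mult_distrib)
  also have "\<dots> = (\<Sum>k\<le>s. ?t k)"
    using binomial_ring[of "- var_x" var_u s] by (simp add: algebra_simps)
  also have "\<dots> = (\<Sum>k<r. ?t k) + (\<Sum>k\<in>{r..s}. ?t k)"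
    using r by (subst sum.union_disjoint[symmetric]) (auto intro!: sum.cong)
  finally have "var_u ^ (s - r + 1) * kernel_gen r s = var_y ^ s * (1 + var_x) ^ s - var_x ^ r * R"
    unfolding head tail by (simp add: algebra_simps)
  thus ?thesis
    using trunc_zero_diff[OF trunc_zero_var_y_power trunc_zero_var_x_power] by metis
qed

text \<open>Coordinate \<open>i * s + j\<close> of a vector corresponds to the coefficient of
  \<open>x\<^sup>r\<^sup>-\<^sup>1\<^sup>-\<^sup>i y\<^sup>s\<^sup>-\<^sup>1\<^sup>-\<^sup>j\<close>; the reversal makes the superdiagonal of \<open>J\<close> act as multiplication
  by a variable.\<close>
definition poly_of_vec :: "nat \<Rightarrow> nat \<Rightarrow> 'a::comm_ring_1 vec \<Rightarrow> 'a fps fps" where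
  "poly_of_vec r s v = Abs_fps (\<lambda>b. Abs_fps (\<lambda>a.
     if a < r \<and> b < s then v $ ((r - 1 - a) * s + (s - 1 - b)) else 0))"

definition vec_of_poly :: "nat \<Rightarrow> nat \<Rightarrow> 'a::comm_ring_1 fps fps \<Rightarrow> 'a vec" where
  "vec_of_poly r s P = vec (r * s) (\<lambda>p. coeff2 P (r - 1 - p div s) (s - 1 - p mod s))"

lemma coeff2_poly_of_vec:
  "coeff2 (poly_of_vec r s v) a b =
     (if a < r \<and> b < s then v $ ((r - 1 - a) * s + (s - 1 - b)) else 0)"
  unfolding poly_of_vec_def by simp

lemma dim_vec_of_poly [simp]: "dim_vec (vec_of_poly r s P) = r * s"
  unfolding vec_of_poly_def by simp

lemma vec_of_poly_carrier [simp]: "vec_of_poly r s P \<in> carrier_vec (r * s)"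
  unfolding carrier_vec_def by simp

lemma block_index_less:
  assumes "i < r" "j < s" shows "i * s + j < r * (s::nat)"
proof -
  have "i * s + j < Suc i * s" using assms(2) by simp
  also have "\<dots> \<le> r * s" using assms(1) by (intro mult_le_mono1) simp
  finally show ?thesis .
qed

lemma block_index_cases:
  assumes "p < r * (s::nat)"
  obtains i j where "i < r" "j < s" "p = i * s + j"
proof
  show "p div s < r" using assms by (simp add: less_mult_imp_div_less)
  show "p mod s < s" using assms by (cases s) auto
qed simp

lemma index_vec_of_poly:
  "i < r \<Longrightarrow> j < s \<Longrightarrow> vec_of_poly r s P $ (i * s + j) = coeff2 P (r - 1 - i) (s - 1 - j)"
  unfolding vec_of_poly_def by (simp add: block_index_less)

lemma vec_of_poly_poly_of_vec:
  assumes "v \<in> carrier_vec (r * s)" shows "vec_of_poly r s (poly_of_vec r s v) = v"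
proof (rule eq_vecI)
  fix p assume "p < dim_vec v"
  hence "p < r * s" using assms by simp
  then obtain i j where ij: "i < r" "j < s" "p = i * s + j" by (rule block_index_cases)
  show "vec_of_poly r s (poly_of_vec r s v) $ p = v $ p"
    unfolding vec_of_poly_def coeff2_poly_of_vec using ij block_index_less[OF ij(1,2)] by auto
qed (use assms vec_of_poly_def in simp)

lemma vec_of_poly_eq_iff:
  "vec_of_poly r s P = vec_of_poly r s Q \<longleftrightarrow> trunc_zero r s (P - Q)"
proof
  assume eq: "vec_of_poly r s P = vec_of_poly r s Q"
  show "trunc_zero r s (P - Q)" unfolding trunc_zero_def
  proof (intro allI impI)
    fix a b assume "a < r" "b < s"
    hence ij: "r - 1 - a < r" "s - 1 - b < s" "r - 1 - (r - 1 - a) = a" "s - 1 - (s - 1 - b) = b"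
      by auto
    show "coeff2 (P - Q) a b = 0"
      using arg_cong[OF eq, of "\<lambda>v. v $ ((r - 1 - a) * s + (s - 1 - b))"]
      unfolding index_vec_of_poly[OF ij(1,2)] ij(3,4) by simp
  qed
next
  assume "trunc_zero r s (P - Q)"
  thus "vec_of_poly r s P = vec_of_poly r s Q"
    unfolding trunc_zero_def vec_of_poly_def
    by (intro eq_vecI) (auto elim!: block_index_cases)
qed

lemma vec_of_poly_eq_0_iff:
  fixes P :: "'a::comm_ring_1 fps fps"
  shows "vec_of_poly r s P = 0\<^sub>v (r * s) \<longleftrightarrow> trunc_zero r s P"
proof -
  have "vec_of_poly r s (0 :: 'a fps fps) = 0\<^sub>v (r * s)" unfolding vec_of_poly_def by auto
  thus ?thesis using vec_of_poly_eq_iff[of r s P 0] by (simp only: diff_zero)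
qed

lemma trunc_zero_poly_of_vec_of_poly: "trunc_zero r s (poly_of_vec r s (vec_of_poly r s P) - P)"
  unfolding vec_of_poly_eq_iff[symmetric] by (rule vec_of_poly_poly_of_vec) simp

lemma dim_row_J [simp]: "dim_row (J n) = n"
  unfolding J_def by simp

lemma dim_col_J [simp]: "dim_col (J n) = n"
  unfolding J_def by simp

lemma index_J:
  "i < n \<Longrightarrow> j < n \<Longrightarrow> (J n :: 'a::{zero,one} mat) $$ (i, j) = (if i = j \<or> Suc i = j then 1 else 0)"
  unfolding J_def by simp

lemma sum_J_row:
  assumes "j < n"
  shows "(\<Sum>j'<n. (J n :: 'a::comm_ring_1 mat) $$ (j, j') * w j') =
    w j + (if Suc j < n then w (Suc j) else 0)"
proof -
  have "(\<Sum>j'<n. (J n :: 'a mat) $$ (j, j') * w j') =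
      (\<Sum>j'<n. (if j' = j then w j' else 0) + (if j' = Suc j then w j' else 0))"
    using assms by (intro sum.cong) (auto simp: index_J)
  thus ?thesis using assms by (simp add: sum.distrib)
qed

lemma sum_lessThan_mult: "(\<Sum>q<r * s. f q) = (\<Sum>i<r. \<Sum>j<(s::nat). f (i * s + j))"
proof -
  have "(\<Sum>q\<in>{i * s..<i * s + s}. f q) = (\<Sum>j<s. f (i * s + j))" for i
  proof -
    have "(\<Sum>q\<in>{i * s..<i * s + s}. f q) = (\<Sum>q\<in>{0 + i * s..<s + i * s}. f q)"
      by (simp add: add.commute)
    also have "\<dots> = (\<Sum>j\<in>{0..<s}. f (j + i * s))" by (rule sum.shift_bounds_nat_ivl)
    finally show ?thesis by (simp add: atLeast0LessThan add.commute)
  qed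
  thus ?thesis by (simp flip: sum.nat_group)
qed

lemma index_mult_mat_vec_sum:
  "A \<in> carrier_mat nr n \<Longrightarrow> v \<in> carrier_vec n \<Longrightarrow> p < nr \<Longrightarrow>
    (A *\<^sub>v v) $ p = (\<Sum>q<n. A $$ (p, q) * v $ q)"
  by (auto simp: scalar_prod_def atLeast0LessThan intro!: sum.cong)

lemma kron_J_carrier_mat: "kron_mat (J r) (J s) \<in> carrier_mat (r * s) (r * s)"
  unfolding kron_mat_def by simp

lemma kron_J_mult_vec_index:
  fixes v :: "'a::comm_ring_1 vec"
  assumes v: "v \<in> carrier_vec (r * s)" and i: "i < r" and j: "j < s"
  shows "(kron_mat (J r) (J s) *\<^sub>v v) $ (i * s + j) =
    v $ (i * s + j) + (if Suc j < s then v $ (i * s + Suc j) else 0) +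
    (if Suc i < r
     then v $ (Suc i * s + j) + (if Suc j < s then v $ (Suc i * s + Suc j) else 0) else 0)"
proof -
  let ?A = "kron_mat (J r) (J s) :: 'a mat"
  have p: "i * s + j < r * s" using i j by (rule block_index_less)
  have entry: "?A $$ (i * s + j, i' * s + j') = J r $$ (i, i') * J s $$ (j, j')"
    if "i' < r" "j' < s" for i' j'
    using block_index_less[OF that] p j that unfolding kron_mat_def by simp
  have "(?A *\<^sub>v v) $ (i * s + j) = (\<Sum>q<r * s. ?A $$ (i * s + j, q) * v $ q)"
    by (rule index_mult_mat_vec_sum[OF kron_J_carrier_mat v p])
  also have "\<dots> = (\<Sum>i'<r. \<Sum>j'<s. ?A $$ (i * s + j, i' * s + j') * v $ (i' * s + j'))"
    by (rule sum_lessThan_mult)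
  also have "\<dots> = (\<Sum>i'<r. J r $$ (i, i') * (\<Sum>j'<s. J s $$ (j, j') * v $ (i' * s + j')))"
    by (auto simp: entry sum_distrib_left mult.assoc intro!: sum.cong)
  also have "\<dots> = (\<Sum>i'<r. J r $$ (i, i') *
      (v $ (i' * s + j) + (if Suc j < s then v $ (i' * s + Suc j) else 0)))"
    using j by (simp add: sum_J_row)
  also have "\<dots> = v $ (i * s + j) + (if Suc j < s then v $ (i * s + Suc j) else 0) +
      (if Suc i < r
       then v $ (Suc i * s + j) + (if Suc j < s then v $ (Suc i * s + Suc j) else 0) else 0)"
    using i by (subst sum_J_row) simp_all
  finally show ?thesis .
qed

lemma char_matrix_1_mult_vec_index:
  fixes A :: "'a::field mat"
  assumes A: "A \<in> carrier_mat n n" and v: "v \<in> carrier_vec n" and p: "p < n"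
  shows "(char_matrix A 1 *\<^sub>v v) $ p = (A *\<^sub>v v) $ p - v $ p"
proof -
  have "(char_matrix A 1 *\<^sub>v v) $ p =
      (\<Sum>q\<in>{0..<n}. (A $$ (p, q) - (if p = q then 1 else 0)) * v $ q)"
    using A v p unfolding char_matrix_def by (auto simp: scalar_prod_def intro!: sum.cong)
  also have "\<dots> = (\<Sum>q\<in>{0..<n}. A $$ (p, q) * v $ q - (if p = q then v $ q else 0))"
    by (rule sum.cong) (auto simp: algebra_simps)
  also have "\<dots> = (A *\<^sub>v v) $ p - v $ p"
    using A v p by (simp add: sum_subtractf scalar_prod_def)
  finally show ?thesis .
qed

lemma char_matrix_kron_J_mult_vec:
  fixes v :: "'a::field vec"
  assumes v: "v \<in> carrier_vec (r * s)"
  shows "char_matrix (kron_mat (J r) (J s)) 1 *\<^sub>v v = vec_of_poly r s (var_u * poly_of_vec r s v)"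
proof (rule eq_vecI)
  fix p assume "p < dim_vec (vec_of_poly r s (var_u * poly_of_vec r s v))"
  hence "p < r * s" by simp
  then obtain i j where ij: "i < r" "j < s" "p = i * s + j" by (rule block_index_cases)
  have p: "i * s + j < r * s" using ij by (intro block_index_less)
  have "(char_matrix (kron_mat (J r) (J s)) 1 *\<^sub>v v) $ p =
      (if Suc j < s then v $ (i * s + Suc j) else 0) +
      (if Suc i < r
       then v $ (Suc i * s + j) + (if Suc j < s then v $ (Suc i * s + Suc j) else 0) else 0)"
    using char_matrix_1_mult_vec_index[OF kron_J_carrier_mat v p]
      kron_J_mult_vec_index[OF v ij(1,2)] ij(3) by simp
  also have "\<dots> = vec_of_poly r s (var_u * poly_of_vec r s v) $ p"
  proof (cases "Suc j < s")
    case True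
    thus ?thesis using ij p
      by (auto simp: vec_of_poly_def coeff2_var_u_mult coeff2_poly_of_vec Suc_diff_Suc
          algebra_simps)
  next
    case False
    hence "s + (s + i * s) - Suc 0 = j + (s + i * s)" using ij by simp
    thus ?thesis using ij p
      by (auto simp: vec_of_poly_def coeff2_var_u_mult coeff2_poly_of_vec Suc_diff_Suc
          algebra_simps)
  qed
  finally show "(char_matrix (kron_mat (J r) (J s)) 1 *\<^sub>v v) $ p =
      vec_of_poly r s (var_u * poly_of_vec r s v) $ p" .
qed (simp add: carrier_matD(1)[OF char_matrix_closed[OF kron_J_carrier_mat]])

lemma vec_of_poly_mult_poly_of_vec_of_poly:
  "vec_of_poly r s (C * poly_of_vec r s (vec_of_poly r s P)) = vec_of_poly r s (C * P)"
  unfolding vec_of_poly_eq_iff right_diff_distrib[symmetric]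
  by (rule trunc_zero_mult_left[OF trunc_zero_poly_of_vec_of_poly])

lemma char_matrix_kron_J_pow_mult_vec:
  fixes v :: "'a::field vec"
  assumes "v \<in> carrier_vec (r * s)"
  shows "(char_matrix (kron_mat (J r) (J s)) 1 ^\<^sub>m k) *\<^sub>v v =
    vec_of_poly r s (var_u ^ k * poly_of_vec r s v)"
  using assms
proof (induction k arbitrary: v)
  case 0
  thus ?case
    by (simp add: vec_of_poly_poly_of_vec carrier_matD(1)[OF char_matrix_closed[OF kron_J_carrier_mat]])
next
  case (Suc k)
  let ?M = "char_matrix (kron_mat (J r) (J s)) (1 :: 'a)"
  have M: "?M \<in> carrier_mat (r * s) (r * s)" by (rule char_matrix_closed[OF kron_J_carrier_mat])
  have "(?M ^\<^sub>m Suc k) *\<^sub>v v = (?M ^\<^sub>m k) *\<^sub>v (?M *\<^sub>v v)"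
    using M Suc.prems by (simp add: assoc_mult_mat_vec[of _ "r * s" "r * s" _ "r * s"])
  also have "\<dots> = vec_of_poly r s (var_u ^ k * (var_u * poly_of_vec r s v))"
    using M Suc.prems
    by (simp add: Suc.IH char_matrix_kron_J_mult_vec vec_of_poly_mult_poly_of_vec_of_poly)
  finally show ?case by (simp only: power_Suc2 mult.assoc)
qed

lemma dim_gen_eigenspace_kron_J_full:
  assumes "0 < r" "0 < s"
  shows "r * s \<le> dim_gen_eigenspace (kron_mat (J r) (J s) :: 'a::field mat) 1 (r + s - 1)"
proof -
  let ?N = "char_matrix (kron_mat (J r) (J s)) (1 :: 'a) ^\<^sub>m (r + s - 1)"
  have "card {..<r * s} \<le> kernel_dim ?N"
  proof (rule kernel_dim_ge_triangular[where w = "unit_vec (r * s)" and piv = id and key = id])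
    show "?N \<in> carrier_mat (r * s) (r * s)"
      by (intro pow_carrier_mat char_matrix_closed kron_J_carrier_mat)
    fix k assume "k \<in> {..<r * s}"
    have "trunc_zero r s (var_u ^ (r + s - 1) * poly_of_vec r s (unit_vec (r * s) k))"
      using assms by (intro trunc_zero_mult_right trunc_zero_var_u_power) simp
    thus "?N *\<^sub>v unit_vec (r * s) k = 0\<^sub>v (r * s)"
      by (simp add: char_matrix_kron_J_pow_mult_vec vec_of_poly_eq_0_iff)
  qed auto
  thus ?thesis unfolding dim_gen_eigenspace_def by simp
qed

lemma trunc_zero_of_var_u_mult:
  assumes ker: "trunc_zero r s (var_u * P)" and s: "0 < s"
    and top: "\<And>a. a < r \<Longrightarrow> coeff2 P a (s - 1) = 0"
  shows "trunc_zero r s P"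
proof -
  have "coeff2 P a b = 0" if "a < r" "b < s" for a b
    using that
  proof (induction a arbitrary: b)
    case 0
    show ?case
    proof (cases "b = s - 1")
      case False
      hence "Suc b < s" using 0 by auto
      with ker 0 show ?thesis unfolding trunc_zero_def by (force simp: coeff2_var_u_mult)
    qed (use top 0 in auto)
  next
    case (Suc a)
    show ?case
    proof (cases "b = s - 1")
      case False
      hence "Suc b < s" using Suc.prems by auto
      with ker Suc.prems Suc.IH[of b] Suc.IH[of "Suc b"] show ?thesis
        unfolding trunc_zero_def by (force simp: coeff2_var_u_mult)
    qed (use top Suc.prems in auto)
  qed
  thus ?thesis unfolding trunc_zero_def by simp
qed

lemma dim_gen_eigenspace_kron_J_1_le:
  assumes s: "0 < s"
  shows "dim_gen_eigenspace (kron_mat (J r) (J s) :: 'a::field mat) 1 1 \<le> r"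
proof -
  let ?M = "char_matrix (kron_mat (J r) (J s)) (1 :: 'a)"
  have M: "?M \<in> carrier_mat (r * s) (r * s)" by (rule char_matrix_closed[OF kron_J_carrier_mat])
  have "kernel_dim ?M \<le> r"
  proof (rule kernel_dim_le_coordinates[OF M, where \<sigma> = "\<lambda>i. i * s"])
    show "i * s < r * s" if "i < r" for i using that s by simp
    fix v assume v: "v \<in> mat_kernel ?M" and top: "\<And>i. i < r \<Longrightarrow> v $ (i * s) = 0"
    have vc: "v \<in> carrier_vec (r * s)" using mat_kernelD(1)[OF M v] .
    have "trunc_zero r s (var_u * poly_of_vec r s v)"
      using mat_kernelD(2)[OF M v]
      by (simp add: char_matrix_kron_J_mult_vec[OF vc] vec_of_poly_eq_0_iff)
    hence "trunc_zero r s (poly_of_vec r s v)"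
      by (rule trunc_zero_of_var_u_mult[OF _ s]) (use top in \<open>simp add: coeff2_poly_of_vec\<close>)
    thus "v = 0\<^sub>v (r * s)"
      using vec_of_poly_poly_of_vec[OF vc] by (simp add: vec_of_poly_eq_0_iff[symmetric])
  qed
  thus ?thesis using M unfolding dim_gen_eigenspace_def by simp
qed

lemma coeff2_generator_pivot:
  assumes "0 < r"
  shows "coeff2 (var_x ^ a * var_y ^ c * kernel_gen r s) a (c + (r - 1)) = 1"
proof -
  obtain m where "r = Suc m" using assms by (cases r) auto
  thus ?thesis
    by (simp add: fps_nth_monomial_mult fps_nth_kernel_gen_top fps_X_power_mult_nth fps_nth_power_0)
qed

lemma coeff2_generator_below_pivot:
  assumes "0 < r" and "c' < c \<or> c' = c \<and> a < a'"
  shows "coeff2 (var_x ^ a' * var_y ^ c' * kernel_gen r s) a (c + (r - 1)) = 0"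
proof -
  obtain m where r: "r = Suc m" using assms(1) by (cases r) auto
  show ?thesis using assms(2)
  proof
    assume "c' < c"
    thus ?thesis by (simp add: fps_nth_monomial_mult fps_nth_kernel_gen_above)
  next
    assume "c' = c \<and> a < a'"
    thus ?thesis unfolding r by (simp add: fps_nth_monomial_mult fps_X_power_mult_nth)
  qed
qed

lemma dim_gen_eigenspace_kron_J_ge:
  assumes r: "0 < r" "r \<le> s"
  shows "r * (s - r + 1) \<le> dim_gen_eigenspace (kron_mat (J r) (J s) :: 'a::field mat) 1 (s - r + 1)"
proof -
  let ?N = "char_matrix (kron_mat (J r) (J s)) (1 :: 'a) ^\<^sub>m (s - r + 1)"
  define K where "K = {..<r} \<times> {..<s - r + 1}"
  define W :: "nat \<times> nat \<Rightarrow> 'a fps fps"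
    where "W k = var_x ^ fst k * var_y ^ snd k * kernel_gen r s" for k
  define piv where "piv k = (r - 1 - fst k) * s + (s - 1 - (snd k + (r - 1)))" for k :: "nat \<times> nat"
  define key where "key k = (snd k, r - 1 - fst k)" for k :: "nat \<times> nat"
  have piv: "piv k < r * s" "vec_of_poly r s P $ piv k = coeff2 P (fst k) (snd k + (r - 1))"
    if "k \<in> K" for k and P :: "'a fps fps"
  proof -
    define i j where "i = r - 1 - fst k" and "j = s - 1 - (snd k + (r - 1))"
    have ij: "i < r" "j < s" "r - 1 - i = fst k" "s - 1 - j = snd k + (r - 1)"
      using that r unfolding K_def i_def j_def by auto
    show "piv k < r * s" "vec_of_poly r s P $ piv k = coeff2 P (fst k) (snd k + (r - 1))"
      unfolding piv_def i_def[symmetric] j_def[symmetric]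
      using block_index_less[OF ij(1,2)] index_vec_of_poly[OF ij(1,2)] ij(3,4) by simp_all
  qed
  have "card K \<le> kernel_dim ?N"
  proof (rule kernel_dim_ge_triangular[where w = "vec_of_poly r s \<circ> W" and piv = piv and key = key])
    show "?N \<in> carrier_mat (r * s) (r * s)"
      by (intro pow_carrier_mat char_matrix_closed kron_J_carrier_mat)
    show "finite K" unfolding K_def by simp
    show "inj_on key K" unfolding K_def key_def by (rule inj_onI) (auto simp: prod_eq_iff)
    fix k assume k: "k \<in> K"
    have "trunc_zero r s (var_u ^ (s - r + 1) * kernel_gen r s * (var_x ^ fst k * var_y ^ snd k))"
      using r by (intro trunc_zero_mult_right trunc_zero_var_u_power_kernel_gen)
    hence "trunc_zero r s (var_u ^ (s - r + 1) * W k)" by (simp add: W_def ac_simps)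
    thus "?N *\<^sub>v (vec_of_poly r s \<circ> W) k = 0\<^sub>v (r * s)"
      by (simp only: comp_apply char_matrix_kron_J_pow_mult_vec[OF vec_of_poly_carrier]
          vec_of_poly_mult_poly_of_vec_of_poly vec_of_poly_eq_0_iff)
    show "piv k < r * s" using piv k by simp
    show "(vec_of_poly r s \<circ> W) k $ piv k = 1"
      using piv(2)[OF k] coeff2_generator_pivot[OF r(1)] unfolding W_def by simp
    fix l assume l: "l \<in> K" and "key l < key k"
    hence "snd l < snd k \<or> snd l = snd k \<and> fst k < fst l"
      using k unfolding key_def K_def by auto
    thus "(vec_of_poly r s \<circ> W) l $ piv k = 0"
      using piv(2)[OF k] coeff2_generator_below_pivot[OF r(1)] unfolding W_def by simp
  qed auto
  thus ?thesis unfolding dim_gen_eigenspace_def K_def by simp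
qed

lemma sum_list_map_mono_eq:
  fixes f g :: "'b \<Rightarrow> nat"
  assumes "\<And>x. x \<in> set xs \<Longrightarrow> f x \<le> g x" and "sum_list (map g xs) \<le> sum_list (map f xs)"
    and "x \<in> set xs"
  shows "f x = g x"
  using assms
proof (induction xs)
  case (Cons y xs)
  have "sum_list (map f xs) \<le> sum_list (map g xs)" using Cons.prems(1) by (intro sum_list_mono) auto
  moreover have "f y \<le> g y" using Cons.prems(1) by simp
  ultimately have "f y = g y" "sum_list (map g xs) \<le> sum_list (map f xs)"
    using Cons.prems(2) by auto
  thus ?case using Cons by auto
qed simp

lemma jordan_nf_block_sizes_between:
  fixes A :: "'a::field mat"
  assumes jnf: "jordan_nf A n_as" and A: "A \<in> carrier_mat n n"
    and nilpotent: "n \<le> dim_gen_eigenspace A ev hi"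
    and few: "dim_gen_eigenspace A ev 1 \<le> m"
    and large: "m * lo \<le> dim_gen_eigenspace A ev lo"
  shows "\<forall>(k, e) \<in> set n_as. e = ev \<and> lo \<le> k \<and> k \<le> hi"
proof -
  define g where "g j = (\<lambda>(k::nat, e). if e = ev then min j k else 0)" for j
  have dim: "dim_gen_eigenspace A ev j = sum_list (map (g j) n_as)" for j
  proof -
    have "(\<Sum>k\<leftarrow>map fst [(k, e)\<leftarrow>xs . e = ev]. min j k) = sum_list (map (g j) xs)" for xs
      unfolding g_def by (induction xs) auto
    thus ?thesis using dim_gen_eigenspace[OF jnf] by simp
  qed
  have pos: "0 < k" if "(k, e) \<in> set n_as" for k e
    using jnf that unfolding jordan_nf_def by force
  have "similar_mat A (jordan_matrix n_as)" using jnf unfolding jordan_nf_def by simp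
  then obtain n' where "A \<in> carrier_mat n' n'" "jordan_matrix n_as \<in> carrier_mat n' n'"
    using similar_matD by blast
  hence "sum_list (map fst n_as) = n" using A by (metis carrier_matD(1) jordan_matrix_dim(1))
  hence "g hi x = fst x" if "x \<in> set n_as" for x
    using nilpotent that unfolding dim by (intro sum_list_map_mono_eq) (auto simp: g_def)
  hence eig: "e = ev" "k \<le> hi" if "(k, e) \<in> set n_as" for k e
    using that pos[OF that] unfolding g_def by (fastforce split: if_splits)+
  have "map (g 1) n_as = map (\<lambda>_. 1) n_as"
    using eig pos unfolding g_def by (intro map_cong) fastforce+
  hence "dim_gen_eigenspace A ev 1 = length n_as" unfolding dim by (simp only: sum_list_triv) simp
  hence "length n_as \<le> m" using few by simp
  hence "sum_list (map (\<lambda>_. lo) n_as) \<le> m * lo" by (simp add: sum_list_triv)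
  hence "sum_list (map (\<lambda>_. lo) n_as) \<le> sum_list (map (g lo) n_as)"
    using large unfolding dim by linarith
  hence "g lo x = lo" if "x \<in> set n_as" for x
    using that by (intro sum_list_map_mono_eq) (auto simp: g_def)
  hence "lo \<le> k" if "(k, e) \<in> set n_as" for k e
    using that eig(1)[OF that] unfolding g_def by fastforce
  thus ?thesis using eig by auto
qed

theorem lemma12:
  fixes p r s :: nat and n_as :: "(nat \<times> 'a :: field) list"
  assumes "prime p" and "CHAR('a) = p"
    and "1 \<le> r" and "r \<le> s"
    and "jordan_nf (kron_mat (J r) (J s) :: 'a mat) n_as"
  shows "\<forall>(k, ev) \<in> set n_as. \<bar>int k - int s\<bar> \<le> int r - 1"
proof -
  have r: "0 < r" "r \<le> s" and s: "0 < s" using assms(3,4) by auto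
  have "\<forall>(k, e) \<in> set n_as. e = 1 \<and> s - r + 1 \<le> k \<and> k \<le> r + s - 1"
  proof (rule jordan_nf_block_sizes_between[OF assms(5) kron_J_carrier_mat])
    show "r * s \<le> dim_gen_eigenspace (kron_mat (J r) (J s) :: 'a mat) 1 (r + s - 1)"
      by (rule dim_gen_eigenspace_kron_J_full[OF r(1) s])
    show "dim_gen_eigenspace (kron_mat (J r) (J s) :: 'a mat) 1 1 \<le> r"
      using s by (rule dim_gen_eigenspace_kron_J_1_le)
    show "r * (s - r + 1) \<le> dim_gen_eigenspace (kron_mat (J r) (J s) :: 'a mat) 1 (s - r + 1)"
      using r by (rule dim_gen_eigenspace_kron_J_ge)
  qed
  thus ?thesis using r by (fastforce simp: abs_le_iff)
qed

end
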